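(* Let $K(\mathbf x)$ and $M(\mathbf x)$ be real symmetric positive definite $n\times n$ matrices depending on a parameter $\mathbf x\in\mathbb R^\ell$ in a $\mathcal C^2$ way. Fix $\mathbf x^{(0)}\in\mathbb R^\ell$ and let $U_m(\mathbf x^{(0)})\in\mathbb R^{n\times m}$ be the $M(\mathbf x^{(0)})$-orthogonal basis produced by the Lanczos process at $\mathbf x^{(0)}$, so that $U_m(\mathbf x^{(0)})^T M(\mathbf x^{(0)}) U_m(\mathbf x^{(0)}) = I_m$. Let $F(\mathbf x) = U_m(\mathbf x)^T M(\mathbf x) K(\mathbf x)^{-1} M(\mathbf x) U_m(\mathbf x)$ be the Lanczos projection at $\mathbf x$, so in particular $F(\mathbf x^{(0)}) = U_m(\mathbf x^{(0)})^T M(\mathbf x^{(0)}) K(\mathbf x^{(0)})^{-1} M(\mathbf x^{(0)}) U_m(\mathbf x^{(0)})$. Then there exist a neighborhood $\mathcal N$ of $\mathbf x^{(0)}$ and a matrix-valued function $U_{m,0}:\mathcal N\to\mathbb R^{n\times m}$ such that: 1. for every $\mathbf x\in\mathcal N$, the columns of $U_{m,0}(\mathbf x)$ form an $M(\mathbf x)$-orthogonal basis of the column span of $U_m(\mathbf x^{(0)})$, i.e. $U_{m,0}(\mathbf x)^T M(\mathbf x) U_{m,0}(\mathbf x) = I_m$ and $\operatorname{span} U_{m,0}(\mathbf x) = \operatorname{span} U_m(\mathbf x^{(0)})$; 2. the function $F_0(\mathbf x) := U_{m,0}(\mathbf x)^T M(\mathbf x) K(\mathbf x)^{-1} M(\mathbf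 x) U_{m,0}(\mathbf x)$ is of class $\mathcal C^2(\mathcal N)$ and $F_0(\mathbf x^{(0)}) = F(\mathbf x^{(0)})$.
   Context: The setting is a parametric finite element model: $K(\mathbf x)$ (stiffness) and $M(\mathbf x)$ (mass) are the constraint-projected matrices, and the smallest eigenvalues of the pencil $K(\mathbf x)-\lambda M(\mathbf x)$ are approximated by running an inverse Lanczos process (with a fixed starting vector) on $M(\mathbf x)^{1/2}K(\mathbf x)^{-1}M(\mathbf x)^{1/2}$, implemented with the $M(\mathbf x)$-inner product; $U_m(\mathbf x)$ denotes the resulting $n\times m$ $M(\mathbf x)$-orthogonal Krylov basis. A matrix $U$ is $M$-orthogonal if $U^TMU=I$. *)

theory Defs
  imports "HOL-Analysis.Analysis"
begin

definition sym_posdef :: "real^'n^'n \<Rightarrow> bool" where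
  "sym_posdef A \<longleftrightarrow> transpose A = A \<and> (\<forall>v::real^'n. v \<noteq> 0 \<longrightarrow> v \<bullet> (A *v v) > 0)"

text \<open>Class C^2 on a set S (intended for open S): twice Frechet differentiable at every
  point of S with continuous second derivative on S.\<close>
definition C2_on :: "'a::real_normed_vector set \<Rightarrow> ('a \<Rightarrow> 'b::real_normed_vector) \<Rightarrow> bool" where
  "C2_on S f \<longleftrightarrow> (\<exists>(f' :: 'a \<Rightarrow> ('a \<Rightarrow>\<^sub>L 'b)) (f'' :: 'a \<Rightarrow> ('a \<Rightarrow>\<^sub>L ('a \<Rightarrow>\<^sub>L 'b))).
     (\<forall>x\<in>S. (f has_derivative blinfun_apply (f' x)) (at x) \<and>
             (f' has_derivative blinfun_apply (f'' x)) (at x)) \<and>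
     continuous_on S f'')"

end

theory Submission
  imports Defs
begin

text \<open>Gram-Schmidt in the M(x)-inner product, applied to the fixed columns of U_m(x0), gives an
  M(x)-orthonormal basis of the same span. Each step only forms sums, products and inner products
  and divides by the square root of an M(x)-norm that stays positive because M(x) is positive
  definite, so this basis depends C^2 on x everywhere; at x0 it returns the columns of U_m(x0)
  unchanged, since they are already M(x0)-orthonormal. By Cramer's rule K(x)^-1 is C^2 as well,
  so F_0 is a product of C^2 matrix functions.\<close>

definition C1_on :: "'a::real_normed_vector set \<Rightarrow> ('a \<Rightarrow> 'b::real_normed_vector) \<Rightarrow> bool" where
  "C1_on S f \<longleftrightarrow> (\<exists>f'::'a \<Rightarrow> ('a \<Rightarrow>\<^sub>L 'b).
     (\<forall>x\<in>S. (f has_derivative blinfun_apply (f' x)) (at x)) \<and> continuous_on S f')"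

lemma C2_on_iff_C1_on_derivative:
  "C2_on S f \<longleftrightarrow> (\<exists>f'. (\<forall>x\<in>S. (f has_derivative blinfun_apply (f' x)) (at x)) \<and> C1_on S f')"
  unfolding C2_on_def C1_on_def by blast

lemma C1_onI:
  "(\<And>x. x \<in> S \<Longrightarrow> (f has_derivative blinfun_apply (f' x)) (at x)) \<Longrightarrow> continuous_on S f' \<Longrightarrow> C1_on S f"
  unfolding C1_on_def by blast

lemma C1_onE:
  assumes "C1_on S f"
  obtains f' where "\<And>x. x \<in> S \<Longrightarrow> (f has_derivative blinfun_apply (f' x)) (at x)" "continuous_on S f'"
  using assms unfolding C1_on_def by blast

lemma C2_onI:
  "(\<And>x. x \<in> S \<Longrightarrow> (f has_derivative blinfun_apply (f' x)) (at x)) \<Longrightarrow> C1_on S f' \<Longrightarrow> C2_on S f"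
  unfolding C2_on_iff_C1_on_derivative by blast

lemma C2_onE:
  assumes "C2_on S f"
  obtains f' where "\<And>x. x \<in> S \<Longrightarrow> (f has_derivative blinfun_apply (f' x)) (at x)" "C1_on S f'"
  using assms unfolding C2_on_iff_C1_on_derivative by blast

lemma C1_on_imp_continuous_on: "C1_on S f \<Longrightarrow> continuous_on S f"
  by (elim C1_onE) (meson continuous_at_imp_continuous_on has_derivative_continuous)

lemma C2_on_imp_C1_on: "C2_on S f \<Longrightarrow> C1_on S f"
  by (elim C2_onE) (metis C1_onI C1_on_imp_continuous_on)

lemma has_derivative_linear_compose_blinfun:
  assumes L: "bounded_linear L" and f: "(f has_derivative blinfun_apply F) (at x)"
  shows "((\<lambda>x. L (f x)) has_derivative blinfun_apply (Blinfun L o\<^sub>L F)) (at x)"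
proof -
  have "blinfun_apply (Blinfun L o\<^sub>L F) = (\<lambda>v. L (F v))"
    by (rule ext) (simp add: bounded_linear_Blinfun_apply[OF L])
  then show ?thesis using bounded_linear.has_derivative[OF L f] by simp
qed

lemma has_derivative_bilinear_blinfun:
  assumes B: "bounded_bilinear B"
    and f: "(f has_derivative blinfun_apply F) (at x)" and g: "(g has_derivative blinfun_apply G) (at x)"
  shows "((\<lambda>x. B (f x) (g x)) has_derivative blinfun_apply
     ((bounded_bilinear.prod_left B (g x) o\<^sub>L F) + (bounded_bilinear.prod_right B (f x) o\<^sub>L G))) (at x)"
proof -
  have "blinfun_apply ((bounded_bilinear.prod_left B (g x) o\<^sub>L F) + (bounded_bilinear.prod_right B (f x) o\<^sub>L G))
      = (\<lambda>h. B (f x) (G h) + B (F h) (g x))"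
    by (rule ext) (simp add: plus_blinfun.rep_eq bounded_bilinear.prod_left.rep_eq[OF B]
        bounded_bilinear.prod_right.rep_eq[OF B] add.commute)
  then show ?thesis using bounded_bilinear.FDERIV[OF B f g] by simp
qed

lemma has_derivative_real_compose_blinfun:
  assumes \<phi>: "(\<phi> has_real_derivative D) (at (f x))" and f: "(f has_derivative blinfun_apply F) (at x)"
  shows "((\<lambda>x. \<phi> (f x :: real)) has_derivative blinfun_apply (D *\<^sub>R F)) (at x)"
proof -
  have "(\<phi> has_derivative (\<lambda>h. D * h)) (at (f x))"
    using \<phi> by (auto simp: has_field_derivative_def)
  from has_derivative_compose[OF f this] show ?thesis by (simp add: scaleR_blinfun.rep_eq)
qed

lemma C1_on_const: "C1_on S (\<lambda>x. c)"
  by (rule C1_onI[of _ _ "\<lambda>x. 0"]) (auto simp: zero_blinfun.rep_eq)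

lemma C1_on_add: assumes "C1_on S f" "C1_on S g" shows "C1_on S (\<lambda>x. f x + g x)"
proof -
  obtain f' where f': "\<And>x. x \<in> S \<Longrightarrow> (f has_derivative blinfun_apply (f' x)) (at x)" "continuous_on S f'"
    using C1_onE[OF assms(1)] by blast
  obtain g' where g': "\<And>x. x \<in> S \<Longrightarrow> (g has_derivative blinfun_apply (g' x)) (at x)" "continuous_on S g'"
    using C1_onE[OF assms(2)] by blast
  show ?thesis
  proof (rule C1_onI)
    show "((\<lambda>x. f x + g x) has_derivative blinfun_apply (f' x + g' x)) (at x)" if "x \<in> S" for x
      using has_derivative_add[OF f'(1) g'(1), OF that that] by (simp add: plus_blinfun.rep_eq)
  qed (intro continuous_on_add f'(2) g'(2))
qed

lemma C1_on_bilinear: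
  assumes B: "bounded_bilinear B" and f: "C1_on S f" and g: "C1_on S g"
  shows "C1_on S (\<lambda>x. B (f x) (g x))"
proof -
  obtain f' where f': "\<And>x. x \<in> S \<Longrightarrow> (f has_derivative blinfun_apply (f' x)) (at x)" "continuous_on S f'"
    using C1_onE[OF f] by blast
  obtain g' where g': "\<And>x. x \<in> S \<Longrightarrow> (g has_derivative blinfun_apply (g' x)) (at x)" "continuous_on S g'"
    using C1_onE[OF g] by blast
  define D where "D = (\<lambda>x. (bounded_bilinear.prod_left B (g x) o\<^sub>L f' x)
      + (bounded_bilinear.prod_right B (f x) o\<^sub>L g' x))"
  have "continuous_on S (\<lambda>x. bounded_bilinear.prod_left B (g x))"
    by (rule bounded_linear.continuous_on[OF bounded_bilinear.bounded_linear_prod_left[OF B]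
          C1_on_imp_continuous_on[OF g]])
  moreover have "continuous_on S (\<lambda>x. bounded_bilinear.prod_right B (f x))"
    by (rule bounded_linear.continuous_on[OF bounded_bilinear.bounded_linear_prod_right[OF B]
          C1_on_imp_continuous_on[OF f]])
  ultimately have "continuous_on S D"
    unfolding D_def using f'(2) g'(2)
    by (intro continuous_on_add bounded_bilinear.continuous_on[OF bounded_bilinear_blinfun_compose])
  moreover have "((\<lambda>x. B (f x) (g x)) has_derivative blinfun_apply (D x)) (at x)" if "x \<in> S" for x
    unfolding D_def using has_derivative_bilinear_blinfun[OF B f'(1)[OF that] g'(1)[OF that]] .
  ultimately show ?thesis by (intro C1_onI)
qed

lemma C1_on_linear: assumes L: "bounded_linear L" and f: "C1_on S f" shows "C1_on S (\<lambda>x. L (f x))"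
proof -
  obtain f' where f': "\<And>x. x \<in> S \<Longrightarrow> (f has_derivative blinfun_apply (f' x)) (at x)" "continuous_on S f'"
    using C1_onE[OF f] by blast
  have "continuous_on S (\<lambda>x. Blinfun L o\<^sub>L f' x)"
    by (rule bounded_bilinear.continuous_on[OF bounded_bilinear_blinfun_compose continuous_on_const f'(2)])
  then show ?thesis
    by (rule C1_onI[OF has_derivative_linear_compose_blinfun[OF L f'(1)], rotated])
qed

lemma C1_on_compose_real:
  assumes \<phi>: "\<And>t. t \<in> T \<Longrightarrow> (\<phi> has_real_derivative \<phi>' t) (at t)" and "continuous_on T \<phi>'"
    and f: "C1_on S f" and "f ` S \<subseteq> T"
  shows "C1_on S (\<lambda>x. \<phi> (f x :: real))"
proof -
  obtain f' where f': "\<And>x. x \<in> S \<Longrightarrow> (f has_derivative blinfun_apply (f' x)) (at x)" "continuous_on S f'"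
    using C1_onE[OF f] by blast
  have "continuous_on S (\<lambda>x. \<phi>' (f x))"
    by (rule continuous_on_compose2[OF assms(2) C1_on_imp_continuous_on[OF f] assms(4)])
  then have "continuous_on S (\<lambda>x. \<phi>' (f x) *\<^sub>R f' x)"
    using f'(2) by (rule continuous_on_scaleR)
  moreover have "((\<lambda>x. \<phi> (f x)) has_derivative blinfun_apply (\<phi>' (f x) *\<^sub>R f' x)) (at x)" if "x \<in> S" for x
    by (rule has_derivative_real_compose_blinfun[OF \<phi> f'(1)[OF that]]) (use that assms(4) in auto)
  ultimately show ?thesis by (intro C1_onI)
qed

lemma C2_on_const: "C2_on S (\<lambda>x. c)"
  by (rule C2_onI[of _ _ "\<lambda>x. 0"]) (auto simp: zero_blinfun.rep_eq intro: C1_on_const)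

lemma C2_on_add: assumes "C2_on S f" "C2_on S g" shows "C2_on S (\<lambda>x. f x + g x)"
proof -
  obtain f' where f': "\<And>x. x \<in> S \<Longrightarrow> (f has_derivative blinfun_apply (f' x)) (at x)" "C1_on S f'"
    using C2_onE[OF assms(1)] by blast
  obtain g' where g': "\<And>x. x \<in> S \<Longrightarrow> (g has_derivative blinfun_apply (g' x)) (at x)" "C1_on S g'"
    using C2_onE[OF assms(2)] by blast
  show ?thesis
  proof (rule C2_onI)
    show "((\<lambda>x. f x + g x) has_derivative blinfun_apply (f' x + g' x)) (at x)" if "x \<in> S" for x
      using has_derivative_add[OF f'(1) g'(1), OF that that] by (simp add: plus_blinfun.rep_eq)
  qed (rule C1_on_add[OF f'(2) g'(2)])
qed

lemma C2_on_bilinear: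
  assumes B: "bounded_bilinear B" and f: "C2_on S f" and g: "C2_on S g"
  shows "C2_on S (\<lambda>x. B (f x) (g x))"
proof -
  obtain f' where f': "\<And>x. x \<in> S \<Longrightarrow> (f has_derivative blinfun_apply (f' x)) (at x)" "C1_on S f'"
    using C2_onE[OF f] by blast
  obtain g' where g': "\<And>x. x \<in> S \<Longrightarrow> (g has_derivative blinfun_apply (g' x)) (at x)" "C1_on S g'"
    using C2_onE[OF g] by blast
  define D where "D = (\<lambda>x. (bounded_bilinear.prod_left B (g x) o\<^sub>L f' x)
      + (bounded_bilinear.prod_right B (f x) o\<^sub>L g' x))"
  have "C1_on S (\<lambda>x. bounded_bilinear.prod_left B (g x))"
    by (rule C1_on_linear[OF bounded_bilinear.bounded_linear_prod_left[OF B] C2_on_imp_C1_on[OF g]])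
  moreover have "C1_on S (\<lambda>x. bounded_bilinear.prod_right B (f x))"
    by (rule C1_on_linear[OF bounded_bilinear.bounded_linear_prod_right[OF B] C2_on_imp_C1_on[OF f]])
  ultimately have "C1_on S D"
    unfolding D_def using f'(2) g'(2) by (intro C1_on_add C1_on_bilinear[OF bounded_bilinear_blinfun_compose])
  moreover have "((\<lambda>x. B (f x) (g x)) has_derivative blinfun_apply (D x)) (at x)" if "x \<in> S" for x
    unfolding D_def using has_derivative_bilinear_blinfun[OF B f'(1)[OF that] g'(1)[OF that]] .
  ultimately show ?thesis by (intro C2_onI)
qed

lemma C2_on_linear: assumes L: "bounded_linear L" and f: "C2_on S f" shows "C2_on S (\<lambda>x. L (f x))"
proof -
  obtain f' where f': "\<And>x. x \<in> S \<Longrightarrow> (f has_derivative blinfun_apply (f' x)) (at x)" "C1_on S f'"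
    using C2_onE[OF f] by blast
  have "C1_on S (\<lambda>x. Blinfun L o\<^sub>L f' x)"
    by (rule C1_on_bilinear[OF bounded_bilinear_blinfun_compose C1_on_const f'(2)])
  then show ?thesis
    by (rule C2_onI[OF has_derivative_linear_compose_blinfun[OF L f'(1)], rotated])
qed

lemma C2_on_compose_real:
  assumes \<phi>: "\<And>t. t \<in> T \<Longrightarrow> (\<phi> has_real_derivative \<phi>' t) (at t)"
    and \<phi>': "\<And>t. t \<in> T \<Longrightarrow> (\<phi>' has_real_derivative \<phi>'' t) (at t)"
    and "continuous_on T \<phi>''" and f: "C2_on S f" and "f ` S \<subseteq> T"
  shows "C2_on S (\<lambda>x. \<phi> (f x :: real))"
proof -
  obtain f' where f': "\<And>x. x \<in> S \<Longrightarrow> (f has_derivative blinfun_apply (f' x)) (at x)" "C1_on S f'"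
    using C2_onE[OF f] by blast
  have "C1_on S (\<lambda>x. \<phi>' (f x))"
    by (rule C1_on_compose_real[OF \<phi>' assms(3) C2_on_imp_C1_on[OF f] assms(5)])
  then have "C1_on S (\<lambda>x. \<phi>' (f x) *\<^sub>R f' x)"
    using f'(2) by (rule C1_on_bilinear[OF bounded_bilinear_scaleR])
  moreover have "((\<lambda>x. \<phi> (f x)) has_derivative blinfun_apply (\<phi>' (f x) *\<^sub>R f' x)) (at x)" if "x \<in> S" for x
    by (rule has_derivative_real_compose_blinfun[OF \<phi> f'(1)[OF that]]) (use that assms(5) in auto)
  ultimately show ?thesis by (intro C2_onI)
qed

lemma C2_on_sum:
  assumes "finite I" "\<And>i. i \<in> I \<Longrightarrow> C2_on S (f i)" shows "C2_on S (\<lambda>x. \<Sum>i\<in>I. f i x)"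
  using assms by (induction I rule: finite_induct) (simp_all add: C2_on_const C2_on_add)

lemma C2_on_mult: "C2_on S f \<Longrightarrow> C2_on S g \<Longrightarrow> C2_on S (\<lambda>x. f x * (g x :: real))"
  by (rule C2_on_bilinear[OF bounded_bilinear_mult])

lemma C2_on_prod:
  assumes "finite I" "\<And>i. i \<in> I \<Longrightarrow> C2_on S (f i :: _ \<Rightarrow> real)" shows "C2_on S (\<lambda>x. \<Prod>i\<in>I. f i x)"
  using assms by (induction I rule: finite_induct) (simp_all add: C2_on_const C2_on_mult)

lemma C2_on_scaleR: "C2_on S f \<Longrightarrow> C2_on S g \<Longrightarrow> C2_on S (\<lambda>x. f x *\<^sub>R g x)"
  by (rule C2_on_bilinear[OF bounded_bilinear_scaleR])

lemma C2_on_diff: assumes "C2_on S f" "C2_on S g" shows "C2_on S (\<lambda>x. f x - g x)"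
proof -
  have "C2_on S (\<lambda>x. f x + - g x)"
    by (intro C2_on_add C2_on_linear[OF bounded_linear_minus[OF bounded_linear_ident]] assms)
  then show ?thesis by simp
qed

lemma C2_on_inverse:
  assumes "C2_on S f" "\<And>x. x \<in> S \<Longrightarrow> f x \<noteq> (0::real)" shows "C2_on S (\<lambda>x. inverse (f x))"
proof (rule C2_on_compose_real[where T = "- {0}" and \<phi> = inverse and \<phi>' = "\<lambda>t. - inverse (t^2)"
      and \<phi>'' = "\<lambda>t. 2 * inverse (t^3)"])
  show "(inverse has_real_derivative - inverse (t^2)) (at t)" if "t \<in> - {0}" for t :: real
    using DERIV_inverse[of t UNIV] that by (simp add: power2_eq_square)
  show "((\<lambda>t. - inverse (t^2)) has_real_derivative 2 * inverse (t^3)) (at t)" if "t \<in> - {0}" for t :: real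
    using that by (auto intro!: derivative_eq_intros simp: field_simps power2_eq_square power3_eq_cube)
  show "continuous_on (- {0}) (\<lambda>t::real. 2 * inverse (t^3))"
    by (intro continuous_intros) auto
qed (use assms in auto)

lemma C2_on_sqrt:
  assumes "C2_on S f" "\<And>x. x \<in> S \<Longrightarrow> f x > (0::real)" shows "C2_on S (\<lambda>x. sqrt (f x))"
proof (rule C2_on_compose_real[where T = "{0<..}" and \<phi> = sqrt and \<phi>' = "\<lambda>t. inverse (sqrt t) / 2"
      and \<phi>'' = "\<lambda>t. - inverse (4 * sqrt t ^ 3)"])
  show "(sqrt has_real_derivative inverse (sqrt t) / 2) (at t)" if "t \<in> {0<..}" for t :: real
    using DERIV_real_sqrt[of t] that by simp
  show "((\<lambda>t. inverse (sqrt t) / 2) has_real_derivative - inverse (4 * sqrt t ^ 3)) (at t)"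
    if "t \<in> {0<..}" for t :: real
    using that by (auto intro!: derivative_eq_intros simp: field_simps power2_eq_square power3_eq_cube)
  show "continuous_on {0<..} (\<lambda>t::real. - inverse (4 * sqrt t ^ 3))"
    by (intro continuous_intros) auto
qed (use assms in auto)

lemma C2_on_vec_nth: "C2_on S f \<Longrightarrow> C2_on S (\<lambda>x. f x $ i)"
  by (rule C2_on_linear[OF bounded_linear_vec_nth])

lemma C2_on_vec_lambda:
  assumes "\<And>i. C2_on S (\<lambda>x. f x i)" shows "C2_on S (\<lambda>x. (\<chi> i. f x i) :: 'b::euclidean_space^'n)"
proof -
  have "linear (axis i :: 'b \<Rightarrow> 'b^'n)" for i
    by (rule linearI) (simp_all add: axis_def vec_eq_iff)
  then have "bounded_linear (axis i :: 'b \<Rightarrow> 'b^'n)" for i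
    by (simp add: linear_conv_bounded_linear)
  then have "C2_on S (\<lambda>x. axis i (f x i) :: 'b^'n)" for i
    by (rule C2_on_linear[OF _ assms])
  then have "C2_on S (\<lambda>x. \<Sum>i\<in>UNIV. axis i (f x i) :: 'b^'n)"
    by (intro C2_on_sum) auto
  moreover have "(\<chi> i. g i) = (\<Sum>i\<in>UNIV. axis i (g i) :: 'b^'n)" for g
    by (simp add: vec_eq_iff axis_def)
  ultimately show ?thesis by simp
qed

lemma C2_on_matrix_matrix_mult:
  "C2_on S A \<Longrightarrow> C2_on S B \<Longrightarrow> C2_on S (\<lambda>x. (A x :: real^'k^'i) ** (B x :: real^'j^'k))"
  unfolding matrix_matrix_mult_def by (intro C2_on_vec_lambda C2_on_sum C2_on_mult C2_on_vec_nth finite)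

lemma C2_on_matrix_vector_mult:
  "C2_on S A \<Longrightarrow> C2_on S v \<Longrightarrow> C2_on S (\<lambda>x. (A x :: real^'k^'i) *v (v x :: real^'k))"
  unfolding matrix_vector_mult_def by (intro C2_on_vec_lambda C2_on_sum C2_on_mult C2_on_vec_nth finite)

lemma C2_on_inner: "C2_on S v \<Longrightarrow> C2_on S w \<Longrightarrow> C2_on S (\<lambda>x. (v x :: real^'k) \<bullet> w x)"
  unfolding inner_vec_def inner_real_def by (intro C2_on_sum C2_on_mult C2_on_vec_nth finite)

lemma C2_on_transpose: "C2_on S A \<Longrightarrow> C2_on S (\<lambda>x. transpose (A x :: real^'k^'i))"
  unfolding transpose_def by (intro C2_on_vec_lambda C2_on_vec_nth)

lemma C2_on_det: "C2_on S A \<Longrightarrow> C2_on S (\<lambda>x. det (A x :: real^'k^'k))"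
  unfolding det_def
  by (intro C2_on_sum C2_on_mult C2_on_prod C2_on_vec_nth C2_on_const finite finite_permutations)

lemma matrix_inv_right: "invertible A \<Longrightarrow> A ** matrix_inv A = mat 1"
  unfolding invertible_def matrix_inv_def by (rule someI2_ex) auto

lemma matrix_inv_cramer:
  fixes A :: "real^'n^'n" assumes "det A \<noteq> 0"
  shows "matrix_inv A $ k $ j = det (\<chi> i l. if l = k then axis j 1 $ i else A $ i $ l) / det A"
proof -
  have "(A ** matrix_inv A) $ i $ j = mat 1 $ i $ j" for i
    using matrix_inv_right assms invertible_det_nz by metis
  then have "A *v (\<chi> k. matrix_inv A $ k $ j) = axis j 1"
    by (simp add: vec_eq_iff matrix_vector_mult_def matrix_matrix_mult_def mat_def axis_def)
  then show ?thesis using cramer[OF assms] by (simp add: vec_eq_iff)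
qed

lemma sym_posdef_det_nonzero:
  fixes A :: "real^'n^'n" assumes "sym_posdef A" shows "det A \<noteq> 0"
proof -
  have "inj ((*v) A)"
  proof (rule injI)
    fix x y assume "A *v x = A *v y"
    then have "A *v (x - y) = 0" by (simp add: matrix_vector_mult_diff_distrib)
    then show "x = y" using assms unfolding sym_posdef_def
      by (metis inner_zero_right less_irrefl right_minus_eq)
  qed
  then show ?thesis
    using det_nz_iff_inj[of "(*v) A"] by (simp add: matrix_vector_mul_linear)
qed

lemma C2_on_matrix_inv:
  assumes K: "C2_on S K" and "\<And>x. det (K x :: real^'n^'n) \<noteq> 0"
  shows "C2_on S (\<lambda>x. matrix_inv (K x))"
proof -
  have "C2_on S (\<lambda>x. \<chi> k j. det (\<chi> i l. if l = k then (axis j 1 :: real^'n) $ i else K x $ i $ l)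
      * inverse (det (K x)))"
  proof (intro C2_on_vec_lambda C2_on_mult C2_on_det C2_on_inverse)
    show "C2_on S (\<lambda>x. if l = k then (axis j 1 :: real^'n) $ i else K x $ i $ l)" for k j i l
      by (cases "l = k") (simp_all add: C2_on_const C2_on_vec_nth K)
  qed (use K assms(2) in \<open>auto intro: C2_on_det\<close>)
  moreover have "(\<lambda>x. matrix_inv (K x)) = (\<lambda>x. \<chi> k j. det (\<chi> i l. if l = k then (axis j 1 :: real^'n) $ i
      else K x $ i $ l) * inverse (det (K x)))"
    by (rule ext) (simp add: vec_eq_iff matrix_inv_cramer assms(2) divide_inverse)
  ultimately show ?thesis by simp
qed

function gram_schmidt :: "real^'n^'n \<Rightarrow> (nat \<Rightarrow> real^'n) \<Rightarrow> nat \<Rightarrow> real^'n" where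
  "gram_schmidt A u k =
     (let v = u k - (\<Sum>j<k. ((A *v gram_schmidt A u j) \<bullet> u k) *\<^sub>R gram_schmidt A u j)
      in (1 / sqrt ((A *v v) \<bullet> v)) *\<^sub>R v)"
  by pat_completeness auto
termination by (relation "Wellfounded.measure (\<lambda>(A, u, k). k)") auto

declare gram_schmidt.simps [simp del]

definition gram_schmidt_resid :: "real^'n^'n \<Rightarrow> (nat \<Rightarrow> real^'n) \<Rightarrow> nat \<Rightarrow> real^'n" where
  "gram_schmidt_resid A u k = u k - (\<Sum>j<k. ((A *v gram_schmidt A u j) \<bullet> u k) *\<^sub>R gram_schmidt A u j)"

lemma gram_schmidt_eq:
  "gram_schmidt A u k = (1 / sqrt ((A *v gram_schmidt_resid A u k) \<bullet> gram_schmidt_resid A u k))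
     *\<^sub>R gram_schmidt_resid A u k"
  unfolding gram_schmidt_resid_def by (subst gram_schmidt.simps) (simp add: Let_def)

definition orthonormal_upto :: "real^'n^'n \<Rightarrow> (nat \<Rightarrow> real^'n) \<Rightarrow> nat \<Rightarrow> bool" where
  "orthonormal_upto A u m \<longleftrightarrow> (\<forall>i<m. \<forall>j<m. (A *v u i) \<bullet> u j = (if i = j then 1 else 0))"

lemma orthonormal_upto_not_in_span:
  assumes "orthonormal_upto A u m" "k < m" shows "u k \<notin> span (u ` {..<k})"
proof
  have "span (u ` {..<k}) \<subseteq> {w. (A *v u k) \<bullet> w = 0}"
  proof (rule span_minimal)
    show "u ` {..<k} \<subseteq> {w. (A *v u k) \<bullet> w = 0}"
      using assms unfolding orthonormal_upto_def by auto
    show "subspace {w. (A *v u k) \<bullet> w = 0}"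
      unfolding subspace_def by (simp add: inner_add_right)
  qed
  moreover assume "u k \<in> span (u ` {..<k})"
  moreover have "(A *v u k) \<bullet> u k = 1"
    using assms unfolding orthonormal_upto_def by simp
  ultimately show False by auto
qed

lemma symmetric_matrix_inner_commute:
  fixes A :: "real^'n^'n" assumes "transpose A = A" shows "(A *v v) \<bullet> w = (A *v w) \<bullet> v"
proof -
  have "(A *v w) \<bullet> v = w \<bullet> (transpose A *v v)"
    by (metis dot_lmul_matrix vector_transpose_matrix)
  then show ?thesis using assms by (simp add: inner_commute)
qed

lemma span_insert_scaled_shift:
  fixes a s :: "'a::real_vector"
  assumes ST: "span S = span T" and s: "s \<in> span T" and "c \<noteq> 0"
  shows "span (insert (c *\<^sub>R (a - s)) S) = span (insert a T)"
proof -
  let ?b = "c *\<^sub>R (a - s)"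
  have S_sub: "S \<subseteq> span (insert a T)"
    using ST span_mono[of T "insert a T"] span_superset[of S] by auto
  have T_sub: "T \<subseteq> span (insert ?b S)"
    using ST span_mono[of S "insert ?b S"] span_superset[of T] by auto
  have s1: "s \<in> span (insert a T)"
    using s span_mono[of T "insert a T"] by auto
  have s2: "s \<in> span (insert ?b S)"
    using s ST span_mono[of S "insert ?b S"] by auto
  have "?b \<in> span (insert a T)"
    by (intro span_scale span_diff s1 span_base insertI1)
  moreover have "inverse c *\<^sub>R ?b + s \<in> span (insert ?b S)"
    by (intro span_add span_scale s2 span_base insertI1)
  then have "a \<in> span (insert ?b S)"
    using \<open>c \<noteq> 0\<close> by simp
  ultimately show ?thesis
    unfolding span_eq using S_sub T_sub by (auto intro: span_base)
qed

lemma gram_schmidt_resid_nonzero: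
  assumes "span (gram_schmidt A u ` {..<k}) = span (u ` {..<k})" "u k \<notin> span (u ` {..<k})"
  shows "gram_schmidt_resid A u k \<noteq> 0"
proof
  assume "gram_schmidt_resid A u k = 0"
  then have "u k = (\<Sum>j<k. ((A *v gram_schmidt A u j) \<bullet> u k) *\<^sub>R gram_schmidt A u j)"
    unfolding gram_schmidt_resid_def by simp
  also have "\<dots> \<in> span (gram_schmidt A u ` {..<k})"
    by (intro span_sum span_scale span_base) auto
  finally show False using assms by simp
qed

lemma gram_schmidt_resid_orthogonal:
  assumes "orthonormal_upto A (gram_schmidt A u) k" "i < k"
  shows "(A *v gram_schmidt A u i) \<bullet> gram_schmidt_resid A u k = 0"
proof -
  let ?G = "gram_schmidt A u"
  have "(\<Sum>j<k. ((A *v ?G j) \<bullet> u k) * ((A *v ?G i) \<bullet> ?G j))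
      = (\<Sum>j<k. if j = i then (A *v ?G j) \<bullet> u k else 0)"
    by (rule sum.cong) (use assms in \<open>auto simp: orthonormal_upto_def\<close>)
  then show ?thesis
    using assms(2) by (simp add: gram_schmidt_resid_def inner_diff_right inner_sum_right)
qed

lemma gram_schmidt_orthonormal_span:
  assumes A: "sym_posdef A" and ind: "\<And>k. k < m \<Longrightarrow> u k \<notin> span (u ` {..<k})" and "k \<le> m"
  shows "orthonormal_upto A (gram_schmidt A u) k \<and> span (gram_schmidt A u ` {..<k}) = span (u ` {..<k})"
  using \<open>k \<le> m\<close>
proof (induction k)
  case 0
  then show ?case by (simp add: orthonormal_upto_def)
next
  case (Suc k)
  define G where "G = gram_schmidt A u"
  define v where "v = gram_schmidt_resid A u k"
  define q where "q = (A *v v) \<bullet> v"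
  from Suc have orth: "orthonormal_upto A G k" and sp: "span (G ` {..<k}) = span (u ` {..<k})"
    unfolding G_def by auto
  have "v \<noteq> 0"
    unfolding v_def using gram_schmidt_resid_nonzero[of A u k] sp ind[of k] Suc.prems unfolding G_def by simp
  then have "q > 0"
    using A unfolding q_def sym_posdef_def by (simp add: inner_commute)
  have Gk: "G k = (1 / sqrt q) *\<^sub>R v"
    unfolding G_def q_def v_def by (rule gram_schmidt_eq)
  have o1: "(A *v G i) \<bullet> G k = 0" if "i < k" for i
    using gram_schmidt_resid_orthogonal[OF orth[unfolded G_def] that] unfolding Gk
    by (simp add: G_def v_def)
  have o2: "(A *v G k) \<bullet> G i = 0" if "i < k" for i
    using o1[OF that] symmetric_matrix_inner_commute A unfolding sym_posdef_def by metis
  have o3: "(A *v G k) \<bullet> G k = 1"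
    using \<open>q > 0\<close> unfolding Gk q_def by (simp add: matrix_vector_mult_scaleR field_simps)
  have "orthonormal_upto A G (Suc k)"
    unfolding orthonormal_upto_def
  proof (intro allI impI)
    fix i j assume "i < Suc k" "j < Suc k"
    then consider "i < k" "j < k" | "i < k" "j = k" | "i = k" "j < k" | "i = k" "j = k" by linarith
    then show "(A *v G i) \<bullet> G j = (if i = j then 1 else 0)"
      by cases (use orth o1 o2 o3 in \<open>auto simp: orthonormal_upto_def\<close>)
  qed
  moreover have "span (G ` {..<Suc k}) = span (u ` {..<Suc k})"
  proof -
    have "(\<Sum>j<k. ((A *v G j) \<bullet> u k) *\<^sub>R G j) \<in> span (u ` {..<k})"
      unfolding sp[symmetric] by (intro span_sum span_scale span_base) auto
    from span_insert_scaled_shift[OF sp this, of "1 / sqrt q" "u k"] \<open>q > 0\<close>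
    show ?thesis
      unfolding lessThan_Suc image_insert Gk v_def gram_schmidt_resid_def by (simp add: G_def)
  qed
  ultimately show ?case by (simp add: G_def)
qed

lemma gram_schmidt_resid_pos:
  assumes "sym_posdef A" "\<And>k. k < m \<Longrightarrow> u k \<notin> span (u ` {..<k})" "k < m"
  shows "(A *v gram_schmidt_resid A u k) \<bullet> gram_schmidt_resid A u k > 0"
proof -
  have "gram_schmidt_resid A u k \<noteq> 0"
    using gram_schmidt_resid_nonzero[of A u k] gram_schmidt_orthonormal_span[OF assms(1,2), of k] assms(2,3)
    by simp
  then show ?thesis using assms(1) unfolding sym_posdef_def by (simp add: inner_commute)
qed

lemma gram_schmidt_eq_self:
  assumes "orthonormal_upto A u m" "k < m" shows "gram_schmidt A u k = u k"
  using \<open>k < m\<close>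
proof (induction k rule: less_induct)
  case (less k)
  have "(\<Sum>j<k. ((A *v gram_schmidt A u j) \<bullet> u k) *\<^sub>R gram_schmidt A u j)
      = (\<Sum>j<k. ((A *v u j) \<bullet> u k) *\<^sub>R u j)"
    by (rule sum.cong) (use less in auto)
  also have "\<dots> = 0"
    by (rule sum.neutral) (use less assms(1) in \<open>auto simp: orthonormal_upto_def\<close>)
  finally have "gram_schmidt_resid A u k = u k" unfolding gram_schmidt_resid_def by simp
  moreover have "(A *v u k) \<bullet> u k = 1" using assms(1) less unfolding orthonormal_upto_def by simp
  ultimately show ?case by (simp add: gram_schmidt_eq[of A u k])
qed

lemma C2_on_gram_schmidt:
  assumes M: "C2_on S M" and pd: "\<And>x. x \<in> S \<Longrightarrow> sym_posdef (M x)"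
    and ind: "\<And>k. k < m \<Longrightarrow> u k \<notin> span (u ` {..<k})" and "k < m"
  shows "C2_on S (\<lambda>x. gram_schmidt (M x) u k)"
  using \<open>k < m\<close>
proof (induction k rule: less_induct)
  case (less k)
  have v: "C2_on S (\<lambda>x. gram_schmidt_resid (M x) u k)"
    unfolding gram_schmidt_resid_def
    by (intro C2_on_diff C2_on_const C2_on_sum C2_on_scaleR C2_on_inner C2_on_matrix_vector_mult M finite)
      (use less in auto)
  have q: "C2_on S (\<lambda>x. (M x *v gram_schmidt_resid (M x) u k) \<bullet> gram_schmidt_resid (M x) u k)"
    by (intro C2_on_inner C2_on_matrix_vector_mult M v)
  have pos: "(M x *v gram_schmidt_resid (M x) u k) \<bullet> gram_schmidt_resid (M x) u k > 0" if "x \<in> S" for x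
    using gram_schmidt_resid_pos[OF pd[OF that] ind less.prems] .
  have "C2_on S (\<lambda>x. inverse (sqrt ((M x *v gram_schmidt_resid (M x) u k) \<bullet> gram_schmidt_resid (M x) u k))
      *\<^sub>R gram_schmidt_resid (M x) u k)"
    using pos by (intro C2_on_scaleR C2_on_inverse C2_on_sqrt q v) (auto simp: less_le)
  then show ?case by (simp add: gram_schmidt_eq[of "M _"] divide_inverse)
qed

text \<open>Gram-Schmidt needs the columns in some order; any enumeration of the column index type will do.\<close>

definition col_enum :: "nat \<Rightarrow> 'm::finite" where
  "col_enum = (SOME e. bij_betw e {..<CARD('m)} UNIV)"

definition col_index :: "'m::finite \<Rightarrow> nat" where
  "col_index = inv_into {..<CARD('m)} col_enum"

lemma bij_betw_col_enum: "bij_betw (col_enum :: nat \<Rightarrow> 'm::finite) {..<CARD('m)} UNIV"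
proof -
  have "\<exists>e :: nat \<Rightarrow> 'm. bij_betw e {..<CARD('m)} UNIV"
    using ex_bij_betw_nat_finite[of "UNIV :: 'm set"] by (simp add: atLeast0LessThan)
  then show ?thesis unfolding col_enum_def by (rule someI_ex)
qed

lemma col_enum_col_index [simp]: "col_enum (col_index j) = j"
  unfolding col_index_def by (meson bij_betw_col_enum bij_betw_inv_into_right UNIV_I)

lemma col_index_col_enum [simp]: "k < CARD('m) \<Longrightarrow> col_index (col_enum k :: 'm::finite) = k"
  unfolding col_index_def by (rule bij_betw_inv_into_left[OF bij_betw_col_enum]) simp

lemma col_index_less [simp]: "col_index (j :: 'm::finite) < CARD('m)"
  unfolding col_index_def using bij_betw_inv_into[OF bij_betw_col_enum] by (auto simp: bij_betw_def)

definition col_seq :: "'a^'m^'n \<Rightarrow> nat \<Rightarrow> 'a^'n" where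
  "col_seq U k = column (col_enum k) U"

lemma col_index_eq_iff [simp]: "col_index i = col_index j \<longleftrightarrow> i = j"
  by (metis col_enum_col_index)

lemma col_enum_eq_iff:
  "i < CARD('m) \<Longrightarrow> j < CARD('m) \<Longrightarrow> (col_enum i :: 'm::finite) = col_enum j \<longleftrightarrow> i = j"
  by (metis col_index_col_enum)

lemma columns_eq_col_seq_image: "columns (U :: 'a^'m::finite^'n) = col_seq U ` {..<CARD('m)}"
proof -
  have "columns U = (\<lambda>j. column j U) ` UNIV"
    by (auto simp: columns_def)
  also have "(UNIV :: 'm set) = col_enum ` {..<CARD('m)}"
    by (rule bij_betw_imp_surj_on[OF bij_betw_col_enum, symmetric])
  finally show ?thesis by (simp add: col_seq_def image_image)
qed

lemma quadratic_form_entry: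
  "(transpose U ** A ** U) $ a $ b = column a U \<bullet> (A *v column b (U :: real^'m^'n))"
  by (simp add: matrix_matrix_mult_def matrix_vector_mult_def inner_vec_def column_def transpose_def
      sum_distrib_left sum_distrib_right mult.assoc)
    (subst sum.swap, simp add: mult.assoc mult.left_commute)

lemma gram_matrix_eq_mat_1_iff:
  fixes U :: "real^'m::finite^'n"
  shows "transpose U ** A ** U = mat 1 \<longleftrightarrow> orthonormal_upto A (col_seq U) CARD('m)"
proof -
  have "transpose U ** A ** U = mat 1 \<longleftrightarrow>
      (\<forall>a b. (A *v column b U) \<bullet> column a U = (if a = b then 1 else 0))"
    by (auto simp: vec_eq_iff quadratic_form_entry inner_commute mat_def)
  also have "\<dots> \<longleftrightarrow> orthonormal_upto A (col_seq U) CARD('m)"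
  proof
    assume "\<forall>a b. (A *v column b U) \<bullet> column a U = (if a = b then 1 else 0)"
    then show "orthonormal_upto A (col_seq U) CARD('m)"
      unfolding orthonormal_upto_def col_seq_def by (simp add: col_enum_eq_iff)
  next
    assume H: "orthonormal_upto A (col_seq U) CARD('m)"
    show "\<forall>a b. (A *v column b U) \<bullet> column a U = (if a = b then 1 else 0)"
    proof (intro allI)
      fix a b :: 'm
      show "(A *v column b U) \<bullet> column a U = (if a = b then 1 else 0)"
        using H unfolding orthonormal_upto_def col_seq_def
        by (metis col_enum_col_index col_index_less col_index_eq_iff)
    qed
  qed
  finally show ?thesis .
qed

definition gram_schmidt_matrix :: "real^'n^'n \<Rightarrow> real^'m^'n \<Rightarrow> real^'m::finite^'n" where
  "gram_schmidt_matrix A U = (\<chi> i j. gram_schmidt A (col_seq U) (col_index j) $ i)"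

lemma col_seq_gram_schmidt_matrix:
  "k < CARD('m) \<Longrightarrow> col_seq (gram_schmidt_matrix A (U :: real^'m::finite^'n)) k = gram_schmidt A (col_seq U) k"
  unfolding col_seq_def gram_schmidt_matrix_def column_def by (simp add: vec_eq_iff)

lemma gram_schmidt_matrix_orthonormal:
  fixes U :: "real^'m::finite^'n"
  assumes "sym_posdef A" "\<And>k. k < CARD('m) \<Longrightarrow> col_seq U k \<notin> span (col_seq U ` {..<k})"
  shows "transpose (gram_schmidt_matrix A U) ** A ** gram_schmidt_matrix A U = mat 1"
  using gram_schmidt_orthonormal_span[OF assms order.refl]
  unfolding gram_matrix_eq_mat_1_iff orthonormal_upto_def by (simp add: col_seq_gram_schmidt_matrix)

lemma span_columns_gram_schmidt_matrix:
  fixes U :: "real^'m::finite^'n"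
  assumes "sym_posdef A" "\<And>k. k < CARD('m) \<Longrightarrow> col_seq U k \<notin> span (col_seq U ` {..<k})"
  shows "span (columns (gram_schmidt_matrix A U)) = span (columns U)"
proof -
  have "col_seq (gram_schmidt_matrix A U) ` {..<CARD('m)} = gram_schmidt A (col_seq U) ` {..<CARD('m)}"
    by (rule image_cong) (simp_all add: col_seq_gram_schmidt_matrix)
  then show ?thesis
    using gram_schmidt_orthonormal_span[OF assms order.refl] by (simp add: columns_eq_col_seq_image)
qed

lemma gram_schmidt_matrix_eq_self:
  fixes U :: "real^'m::finite^'n"
  assumes "transpose U ** A ** U = mat 1" shows "gram_schmidt_matrix A U = U"
proof -
  have "gram_schmidt A (col_seq U) (col_index j) = column j U" for j
    using gram_schmidt_eq_self[OF assms[unfolded gram_matrix_eq_mat_1_iff]] by (simp add: col_seq_def)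
  then show ?thesis unfolding gram_schmidt_matrix_def by (simp add: vec_eq_iff column_def)
qed

lemma C2_on_gram_schmidt_matrix:
  fixes U :: "real^'m::finite^'n"
  assumes "C2_on S M" "\<And>x. x \<in> S \<Longrightarrow> sym_posdef (M x)"
    and "\<And>k. k < CARD('m) \<Longrightarrow> col_seq U k \<notin> span (col_seq U ` {..<k})"
  shows "C2_on S (\<lambda>x. gram_schmidt_matrix (M x) U)"
  unfolding gram_schmidt_matrix_def
  by (intro C2_on_vec_lambda C2_on_vec_nth C2_on_gram_schmidt[OF assms col_index_less])

theorem lemma1:
  fixes K M :: "real^'l \<Rightarrow> real^'n^'n"
    and x0 :: "real^'l"
    and Um :: "real^'m^'n"
  assumes "\<And>x. sym_posdef (K x)"
    and "\<And>x. sym_posdef (M x)"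
    and "C2_on UNIV K"
    and "C2_on UNIV M"
    and "transpose Um ** M x0 ** Um = mat 1"
  shows "\<exists>N (U0 :: real^'l \<Rightarrow> real^'m^'n).
           open N \<and> x0 \<in> N \<and>
           (\<forall>x\<in>N. transpose (U0 x) ** M x ** U0 x = mat 1 \<and>
                    span (columns (U0 x)) = span (columns Um)) \<and>
           C2_on N (\<lambda>x. transpose (U0 x) ** M x ** matrix_inv (K x) ** M x ** U0 x) \<and>
           transpose (U0 x0) ** M x0 ** matrix_inv (K x0) ** M x0 ** U0 x0
             = transpose Um ** M x0 ** matrix_inv (K x0) ** M x0 ** Um"
proof -
  have ind: "\<And>k. k < CARD('m) \<Longrightarrow> col_seq Um k \<notin> span (col_seq Um ` {..<k})"
    using orthonormal_upto_not_in_span assms(5)[unfolded gram_matrix_eq_mat_1_iff] by blast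
  define U0 where "U0 x = gram_schmidt_matrix (M x) Um" for x
  have "C2_on UNIV (\<lambda>x. transpose (U0 x) ** M x ** matrix_inv (K x) ** M x ** U0 x)"
    unfolding U0_def
    by (intro C2_on_matrix_matrix_mult C2_on_transpose C2_on_gram_schmidt_matrix C2_on_matrix_inv
        sym_posdef_det_nonzero assms ind)
  moreover have "U0 x0 = Um"
    unfolding U0_def by (rule gram_schmidt_matrix_eq_self[OF assms(5)])
  moreover have "transpose (U0 x) ** M x ** U0 x = mat 1 \<and> span (columns (U0 x)) = span (columns Um)" for x
    unfolding U0_def
    using gram_schmidt_matrix_orthonormal[OF assms(2) ind] span_columns_gram_schmidt_matrix[OF assms(2) ind]
    by blast
  ultimately show ?thesis by (intro exI[of _ UNIV] exI[of _ U0]) simp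
qed

end
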